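(* Let $H$ be as in the context. Then, as $p\to0$, \[ H(p)\sim(\sigma p)^{2/\mu}\left(2\Gamma(1-\mu)\right)^{-1/\mu}. \]
   Context: Fix $\mu\in(0,1)$, $\sigma>0$. Let $\Phi(a)=\mu(1+a)^{-1-\mu}$ for $a\ge0$ and $\omega(z)=\frac{1}{\sigma\sqrt{2\pi}}e^{-z^2/(2\sigma^2)}$ (a Gaussian of variance $\sigma^2$). For $p\in\mathbb{R}$, $H(p)\ge0$ is the unique solution of $\int_0^\infty\Phi(a)e^{-aH(p)}\,\mathrm{d}a\cdot\int_{\mathbb{R}}\omega(z)e^{zp}\,\mathrm{d}z=1$. $\Gamma$ denotes the Gamma function. *)

theory Defs
  imports "HOL-Analysis.Analysis" "HOL-Library.Landau_Symbols"
begin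

definition Phi :: "real \<Rightarrow> real \<Rightarrow> real" where
  "Phi \<mu> a = \<mu> * (1 + a) powr (-1 - \<mu>)"

definition omega :: "real \<Rightarrow> real \<Rightarrow> real" where
  "omega \<sigma> z = 1 / (\<sigma> * sqrt (2 * pi)) * exp (- z\<^sup>2 / (2 * \<sigma>\<^sup>2))"

definition Hfun :: "real \<Rightarrow> real \<Rightarrow> real \<Rightarrow> real" where
  "Hfun \<mu> \<sigma> p = (THE h. h \<ge> 0 \<and>
     (LINT a:{0..}|lborel. Phi \<mu> a * exp (- a * h)) *
     (LINT z|lborel. omega \<sigma> z * exp (z * p)) = 1)"

end

theory Submission
  imports Defs "HOL-Probability.Probability" "HOL-Real_Asymp.Real_Asymp"
begin

text \<open>The Gaussian factor equals \<open>exp ((\<sigma> p)\<^sup>2 / 2)\<close>, so \<open>H(p)\<close> is the root of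
  \<open>L(h) = exp (-(\<sigma> p)\<^sup>2 / 2)\<close>, where \<open>L\<close> is the Laplace transform of \<open>\<Phi>\<close>. Integrating by parts and
  substituting \<open>a = u / h\<close> gives \<open>L(h) = 1 - h\<^sup>\<mu> K(h)\<close> with
  \<open>K(h) = \<integral>\<^sub>0\<^sup>\<infinity> (h + u)\<^sup>-\<^sup>\<mu> e\<^sup>-\<^sup>u du\<close>, which is continuous with \<open>K(0) = \<Gamma>(1 - \<mu>)\<close>.
  Since \<open>L\<close> is continuous and strictly decreasing from \<open>L(0) = 1\<close>, the root exists for small \<open>p\<close>
  and tends to \<open>0\<close>, so \<open>H\<^sup>\<mu> = (1 - exp (-(\<sigma> p)\<^sup>2 / 2)) / K(H) \<sim> (\<sigma> p)\<^sup>2 / (2 \<Gamma>(1 - \<mu>))\<close>.\<close>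

lemma omega_mgf:
  assumes "0 < \<sigma>"
  shows "(LINT z|lborel. omega \<sigma> z * exp (z * p)) = exp ((\<sigma> * p)\<^sup>2 / 2)"
proof -
  have "omega \<sigma> z * exp (z * p) = exp ((\<sigma> * p)\<^sup>2 / 2) * normal_density (\<sigma>\<^sup>2 * p) \<sigma> z" for z
  proof -
    have "sqrt (2 * pi * \<sigma>\<^sup>2) = \<sigma> * sqrt (2 * pi)"
      using assms by (simp add: real_sqrt_mult mult.commute)
    moreover have "- z\<^sup>2 / (2 * \<sigma>\<^sup>2) + z * p = (\<sigma> * p)\<^sup>2 / 2 - (z - \<sigma>\<^sup>2 * p)\<^sup>2 / (2 * \<sigma>\<^sup>2)"
      using assms by (simp add: field_simps power2_eq_square)
    ultimately show ?thesis
      unfolding omega_def normal_density_def by (simp add: mult_exp_exp)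
  qed
  then show ?thesis
    using integral_normal_density[OF assms, of "\<sigma>\<^sup>2 * p"] by simp
qed

lemma tendsto_integral_dominated_within:
  fixes f :: "'a::first_countable_topology \<Rightarrow> 'b \<Rightarrow> 'c::{banach, second_countable_topology}"
  assumes "integrable M w"
    and "\<And>t. t \<in> S \<Longrightarrow> f t \<in> borel_measurable M" "g \<in> borel_measurable M"
    and bound: "\<And>t. t \<in> S \<Longrightarrow> AE u in M. norm (f t u) \<le> w u"
    and lim: "AE u in M. ((\<lambda>t. f t u) \<longlongrightarrow> g u) (at x within S)"
  shows "((\<lambda>t. integral\<^sup>L M (f t)) \<longlongrightarrow> integral\<^sup>L M g) (at x within S)"
  unfolding tendsto_at_iff_sequentially comp_def
proof (intro allI impI)
  fix X :: "nat \<Rightarrow> 'a"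
  assume X: "\<forall>i. X i \<in> S - {x}" "X \<longlonglongrightarrow> x"
  show "(\<lambda>i. integral\<^sup>L M (f (X i))) \<longlonglongrightarrow> integral\<^sup>L M g"
  proof (rule integral_dominated_convergence[where w = w])
    show "AE u in M. (\<lambda>i. f (X i) u) \<longlonglongrightarrow> g u"
      using lim by eventually_elim (use X in \<open>auto simp: tendsto_at_iff_sequentially comp_def\<close>)
  qed (use assms X in auto)
qed

lemma Gamma_set_integral:
  fixes s :: real
  assumes "0 < s"
  shows "set_integrable lborel {0..} (\<lambda>u. u powr (s - 1) * exp (- u))"
    and "(LINT u:{0..}|lborel. u powr (s - 1) * exp (- u)) = Gamma s"
proof -
  have Gamma: "((\<lambda>u. u powr (s - 1) * exp (- u)) has_integral Gamma s) {0..}"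
    using Gamma_integral_real[OF assms] by (simp add: exp_minus divide_inverse)
  then have "(\<lambda>u. u powr (s - 1) * exp (- u)) absolutely_integrable_on {0..}"
    by (intro nonnegative_absolutely_integrable_1) auto
  then show integrable: "set_integrable lborel {0..} (\<lambda>u. u powr (s - 1) * exp (- u))"
    unfolding set_integrable_def by (subst (asm) integrable_completion) auto
  show "(LINT u:{0..}|lborel. u powr (s - 1) * exp (- u)) = Gamma s"
    using set_borel_integral_eq_integral(2)[OF integrable] Gamma by (simp add: integral_unique)
qed

lemma integral_lborel_pos:
  fixes f :: "real \<Rightarrow> real"
  assumes "integrable lborel f" "\<And>x. 0 \<le> f x" "a < b" "\<And>x. x \<in> {a<..<b} \<Longrightarrow> 0 < f x"
  shows "0 < integral\<^sup>L lborel f"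
proof -
  have "integral\<^sup>L lborel f \<noteq> 0"
  proof
    assume "integral\<^sup>L lborel f = 0"
    then have "AE x in lborel. f x = 0"
      using integral_nonneg_eq_0_iff_AE assms(1,2) by blast
    then have "AE x in lborel. x \<notin> {a<..<b}"
      by eventually_elim (use assms(4) in force)
    then have "emeasure lborel {a<..<b} = 0"
      by (subst (asm) AE_iff_measurable[where N = "{a<..<b}"]) auto
    with \<open>a < b\<close> show False by simp
  qed
  moreover have "0 \<le> integral\<^sup>L lborel f"
    using assms(2) by simp
  ultimately show ?thesis by linarith
qed

definition Phi_laplace :: "real \<Rightarrow> real \<Rightarrow> real" where
  "Phi_laplace \<mu> h = (LINT a:{0..}|lborel. Phi \<mu> a * exp (- a * h))"

definition shifted_Gamma :: "real \<Rightarrow> real \<Rightarrow> real" where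
  "shifted_Gamma \<mu> h = (LINT u:{0..}|lborel. (h + u) powr (- \<mu>) * exp (- u))"

lemma shifted_Gamma_0:
  assumes "\<mu> < 1"
  shows "shifted_Gamma \<mu> 0 = Gamma (1 - \<mu>)"
  using Gamma_set_integral(2)[of "1 - \<mu>"] assms by (simp add: shifted_Gamma_def)

lemma continuous_on_shifted_Gamma:
  assumes "0 < \<mu>" "\<mu> < 1"
  shows "continuous_on {0..} (shifted_Gamma \<mu>)"
  unfolding continuous_on_def
proof
  fix x :: real
  assume x: "x \<in> {0..}"
  let ?f = "\<lambda>t u. indicator {0..} u * ((t + u) powr (- \<mu>) * exp (- u)) :: real"
  have "((\<lambda>t. integral\<^sup>L lborel (?f t)) \<longlongrightarrow> integral\<^sup>L lborel (?f x)) (at x within {0..})"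
  proof (rule tendsto_integral_dominated_within)
    show "integrable lborel (?f 0)"
      using Gamma_set_integral(1)[of "1 - \<mu>"] assms by (simp add: set_integrable_def)
    show "AE u in lborel. norm (?f t u) \<le> ?f 0 u" if "t \<in> {0..}" for t
      using AE_lborel_singleton[of 0]
    proof eventually_elim
      case (elim u)
      then have "0 < u \<Longrightarrow> (t + u) powr (- \<mu>) \<le> u powr (- \<mu>)"
        using that assms by (intro powr_mono2') auto
      with elim show ?case by (auto simp: indicator_def mult_right_mono)
    qed
    show "AE u in lborel. ((\<lambda>t. ?f t u) \<longlongrightarrow> ?f x u) (at x within {0..})"
      using AE_lborel_singleton[of 0]
    proof eventually_elim
      case (elim u)
      show ?case
      proof (cases "0 < u")
        case True
        with x show ?thesis by (auto intro!: tendsto_intros)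
      qed (use elim in \<open>simp add: indicator_def\<close>)
    qed
  qed auto
  then show "(shifted_Gamma \<mu> \<longlongrightarrow> shifted_Gamma \<mu> x) (at x within {0..})"
    by (simp add: shifted_Gamma_def[abs_def] set_lebesgue_integral_def)
qed

lemma Phi_laplace_by_parts:
  assumes "0 < \<mu>" "0 \<le> h"
  shows "set_integrable lborel {0..}
           (\<lambda>a. Phi \<mu> a * exp (- a * h) + h * ((1 + a) powr (- \<mu>) * exp (- a * h)))"
    and "(LINT a:{0..}|lborel.
           Phi \<mu> a * exp (- a * h) + h * ((1 + a) powr (- \<mu>) * exp (- a * h))) = 1"
proof -
  define f where "f a = Phi \<mu> a * exp (- a * h) + h * ((1 + a) powr (- \<mu>) * exp (- a * h))"
    for a :: real
  define F where "F a = - ((1 + a) powr (- \<mu>) * exp (- a * h))" for a :: real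
  have exponent: "- \<mu> - 1 = - 1 - \<mu>"
    by simp
  have "DERIV F a :> f a" if "0 < ereal a" for a
    using that assms unfolding F_def f_def Phi_def
    by (auto intro!: derivative_eq_intros simp: algebra_simps exponent zero_ereal_def)
  moreover have "isCont f a" if "0 < ereal a" for a
    using that unfolding f_def Phi_def by (auto intro!: continuous_intros simp: zero_ereal_def)
  moreover have "AE a in lborel. 0 < ereal a \<longrightarrow> ereal a < \<infinity> \<longrightarrow> 0 \<le> f a"
    using assms by (auto simp: f_def Phi_def zero_ereal_def)
  moreover have "((F \<circ> real_of_ereal) \<longlongrightarrow> -1) (at_right 0)"
    unfolding zero_ereal_def ereal_tendsto_simps F_def
    by (rule tendsto_eq_intros refl | simp)+
  moreover have "((F \<circ> real_of_ereal) \<longlongrightarrow> 0) (at_left \<infinity>)"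
  proof -
    have decay: "((\<lambda>a::real. (1 + a) powr (- \<mu>)) \<longlongrightarrow> 0) at_top"
      using assms by real_asymp
    have "((\<lambda>a. (1 + a) powr (- \<mu>) * exp (- a * h)) \<longlongrightarrow> 0) at_top"
    proof (rule tendsto_sandwich[OF _ _ tendsto_const decay])
      show "\<forall>\<^sub>F a in at_top. (1 + a) powr (- \<mu>) * exp (- a * h) \<le> (1 + a) powr (- \<mu>)"
        using eventually_ge_at_top[of 0] by eventually_elim (use assms in \<open>simp add: mult_left_le\<close>)
    qed simp
    from tendsto_minus[OF this] show ?thesis
      unfolding ereal_tendsto_simps F_def by simp
  qed
  ultimately have "set_integrable lborel (einterval 0 \<infinity>) f" "(LBINT a=0..\<infinity>. f a) = 0 - (-1)"
    using interval_integral_FTC_nonneg[of 0 \<infinity> F f] by auto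
  moreover have "einterval 0 \<infinity> = {0<..}"
    by (auto simp: einterval_def zero_ereal_def)
  moreover have "set_integrable lborel {0<..} f = set_integrable lborel {0..} f"
    by (rule set_integrable_discrete_difference[where X = "{0}"]) auto
  moreover have "(LINT a:{0<..}|lborel. f a) = (LINT a:{0..}|lborel. f a)"
    by (rule set_integral_discrete_difference[where X = "{0}"]) auto
  ultimately show "set_integrable lborel {0..} f" "(LINT a:{0..}|lborel. f a) = 1"
    by (simp_all add: interval_lebesgue_integral_0_infty)
qed

lemma Phi_laplace_remainder:
  assumes "0 < h"
  shows "h * (LINT a:{0..}|lborel. (1 + a) powr (- \<mu>) * exp (- a * h))
           = h powr \<mu> * shifted_Gamma \<mu> h"
proof -
  have substitute: "indicator {0..} (0 + 1 / h * u) *\<^sub>R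
        ((1 + (0 + 1 / h * u)) powr (- \<mu>) * exp (- (0 + 1 / h * u) * h))
      = h powr \<mu> * (indicator {0..} u *\<^sub>R ((h + u) powr (- \<mu>) * exp (- u)))" for u :: real
  proof (cases "0 \<le> u")
    case True
    have "(1 + u / h) powr (- \<mu>) = ((h + u) / h) powr (- \<mu>)"
      using assms by (simp add: field_simps)
    also have "\<dots> = h powr \<mu> * (h + u) powr (- \<mu>)"
      using assms True by (simp add: powr_divide powr_minus field_simps)
    finally show ?thesis
      using True assms by (simp add: indicator_def)
  qed (use assms in \<open>simp add: indicator_def field_simps\<close>)
  have "(LINT a:{0..}|lborel. (1 + a) powr (- \<mu>) * exp (- a * h))
      = \<bar>1 / h\<bar> *\<^sub>R (LBINT u. indicator {0..} (0 + 1 / h * u) *\<^sub>R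
          ((1 + (0 + 1 / h * u)) powr (- \<mu>) * exp (- (0 + 1 / h * u) * h)))"
    unfolding set_lebesgue_integral_def
    by (rule lborel_integral_real_affine) (use assms in simp)
  also have "\<dots> = 1 / h * (h powr \<mu> * shifted_Gamma \<mu> h)"
    unfolding substitute using assms by (simp add: shifted_Gamma_def set_lebesgue_integral_def)
  finally show ?thesis
    using assms by simp
qed

lemma Phi_laplace_integrable:
  assumes "0 < \<mu>" "0 \<le> h"
  shows "set_integrable lborel {0..} (\<lambda>a. Phi \<mu> a * exp (- a * h))"
    and "set_integrable lborel {0..} (\<lambda>a. h * ((1 + a) powr (- \<mu>) * exp (- a * h)))"
  using Phi_laplace_by_parts(1)[OF assms] unfolding set_integrable_def
  by (rule Bochner_Integration.integrable_bound; use assms in \<open>force simp: Phi_def indicator_def\<close>)+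

lemma Phi_laplace_eq:
  assumes "0 < \<mu>" "0 \<le> h"
  shows "Phi_laplace \<mu> h = 1 - h powr \<mu> * shifted_Gamma \<mu> h"
proof -
  have "1 = Phi_laplace \<mu> h + (LINT a:{0..}|lborel. h * ((1 + a) powr (- \<mu>) * exp (- a * h)))"
    using Phi_laplace_by_parts(2)[OF assms] set_integral_add(2)[OF Phi_laplace_integrable[OF assms]]
    by (simp add: Phi_laplace_def)
  also have "(LINT a:{0..}|lborel. h * ((1 + a) powr (- \<mu>) * exp (- a * h)))
      = h powr \<mu> * shifted_Gamma \<mu> h"
    using Phi_laplace_remainder[of h \<mu>] assms by (cases "h = 0") auto
  finally show ?thesis by simp
qed

lemma Phi_laplace_0: "0 < \<mu> \<Longrightarrow> Phi_laplace \<mu> 0 = 1"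
  by (simp add: Phi_laplace_eq)

lemma continuous_on_Phi_laplace:
  assumes "0 < \<mu>" "\<mu> < 1"
  shows "continuous_on {0..} (Phi_laplace \<mu>)"
proof -
  have "continuous_on {0..} (\<lambda>h. 1 - h powr \<mu> * shifted_Gamma \<mu> h)"
    using assms continuous_on_shifted_Gamma[OF assms]
    by (intro continuous_intros continuous_on_powr') auto
  then show ?thesis
    by (rule continuous_on_cong[THEN iffD1, rotated 2]) (use assms Phi_laplace_eq in auto)
qed

lemma Phi_laplace_strict_antimono:
  assumes "0 < \<mu>" "0 \<le> h1" "h1 < h2"
  shows "Phi_laplace \<mu> h2 < Phi_laplace \<mu> h1"
proof -
  define d where "d = (\<lambda>a. indicator {0..} a *
    (Phi \<mu> a * exp (- a * h1) - Phi \<mu> a * exp (- a * h2)) :: real)"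
  have integrable: "set_integrable lborel {0..} (\<lambda>a. Phi \<mu> a * exp (- a * h1))"
    "set_integrable lborel {0..} (\<lambda>a. Phi \<mu> a * exp (- a * h2))"
    using Phi_laplace_integrable(1)[OF assms(1)] assms by auto
  have "Phi_laplace \<mu> h1 - Phi_laplace \<mu> h2 = integral\<^sup>L lborel d"
    using set_integral_diff(2)[OF integrable]
    by (simp add: Phi_laplace_def d_def set_lebesgue_integral_def)
  moreover have "0 < integral\<^sup>L lborel d"
  proof (rule integral_lborel_pos[of d 0 1])
    show "integrable lborel d"
      using set_integral_diff(1)[OF integrable] by (simp add: d_def set_integrable_def)
    have "0 < Phi \<mu> a * exp (- a * h1) - Phi \<mu> a * exp (- a * h2)" if "0 < a" for a
      using that assms by (simp add: Phi_def)
    then show "0 < d a" if "a \<in> {0<..<1}" for a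
      using that by (simp add: d_def)
    show "0 \<le> d a" for a
      using assms by (simp add: d_def Phi_def indicator_def mult_left_mono)
  qed simp
  ultimately show ?thesis by simp
qed

lemma Phi_laplace_inj:
  assumes "0 < \<mu>" "0 \<le> x" "0 \<le> y" "Phi_laplace \<mu> x = Phi_laplace \<mu> y"
  shows "x = y"
  using Phi_laplace_strict_antimono[OF assms(1), of x y] Phi_laplace_strict_antimono[OF assms(1), of y x]
    assms by (metis less_irrefl linorder_neqE_linordered_idom)

lemma mult_exp_eq_1_iff: "x * exp c = 1 \<longleftrightarrow> x = exp (- c)" for x c :: real
  by (metis exp_minus_inverse mult.assoc mult.commute mult_1)

lemma Hfun_eqI:
  assumes "0 < \<mu>" "0 < \<sigma>" "0 \<le> h" "Phi_laplace \<mu> h = exp (- ((\<sigma> * p)\<^sup>2 / 2))"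
  shows "Hfun \<mu> \<sigma> p = h"
proof -
  have equation: "(LINT a:{0..}|lborel. Phi \<mu> a * exp (- a * y)) *
      (LINT z|lborel. omega \<sigma> z * exp (z * p)) = 1
      \<longleftrightarrow> Phi_laplace \<mu> y = exp (- ((\<sigma> * p)\<^sup>2 / 2))" for y
    using mult_exp_eq_1_iff[of "Phi_laplace \<mu> y" "(\<sigma> * p)\<^sup>2 / 2"]
    unfolding omega_mgf[OF assms(2)] Phi_laplace_def .
  show ?thesis
    unfolding Hfun_def equation
  proof (rule the_equality)
    show "y = h" if "0 \<le> y \<and> Phi_laplace \<mu> y = exp (- ((\<sigma> * p)\<^sup>2 / 2))" for y
      using that assms Phi_laplace_inj[OF assms(1), of y h] by simp
  qed (use assms in simp)
qed

lemma tendsto_zero_of_strict_antimono_solutions: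
  fixes f :: "real \<Rightarrow> real"
  assumes antimono: "\<And>x y. 0 \<le> x \<Longrightarrow> x < y \<Longrightarrow> f y < f x"
    and solves: "\<forall>\<^sub>F p in F. 0 \<le> H p \<and> f (H p) = r p"
    and "(r \<longlongrightarrow> f 0) F"
  shows "(H \<longlongrightarrow> 0) F"
proof (rule order_tendstoI)
  fix a :: real
  assume "a < 0"
  from solves show "\<forall>\<^sub>F p in F. a < H p"
    by eventually_elim (use \<open>a < 0\<close> in auto)
next
  fix a :: real
  assume "0 < a"
  then have "f a < f 0"
    using antimono by auto
  from order_tendstoD(1)[OF assms(3) this] solves show "\<forall>\<^sub>F p in F. H p < a"
  proof eventually_elim
    case (elim p)
    then show ?case
      using antimono[of a "H p"] \<open>0 < a\<close> by (metis less_imp_le not_less_iff_gr_or_eq order.strict_trans)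
  qed
qed

lemma eventually_Hfun_solves:
  assumes "0 < \<mu>" "\<mu> < 1" "0 < \<sigma>"
  shows "\<forall>\<^sub>F p in at 0. 0 \<le> Hfun \<mu> \<sigma> p \<and>
           Phi_laplace \<mu> (Hfun \<mu> \<sigma> p) = exp (- ((\<sigma> * p)\<^sup>2 / 2))"
proof -
  have "Phi_laplace \<mu> 1 < 1"
    using Phi_laplace_strict_antimono[OF assms(1), of 0 1] Phi_laplace_0[OF assms(1)] by simp
  moreover have "((\<lambda>p. exp (- ((\<sigma> * p)\<^sup>2 / 2))) \<longlongrightarrow> 1) (at (0::real))"
    by (auto intro!: tendsto_eq_intros)
  ultimately have "\<forall>\<^sub>F p in at 0. Phi_laplace \<mu> 1 < exp (- ((\<sigma> * p)\<^sup>2 / 2))"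
    using order_tendstoD(1) by blast
  then show ?thesis
  proof eventually_elim
    case (elim p)
    have "continuous_on {0..1} (Phi_laplace \<mu>)"
      using continuous_on_Phi_laplace[OF assms(1,2)] by (rule continuous_on_subset) auto
    moreover have "exp (- ((\<sigma> * p)\<^sup>2 / 2)) \<le> Phi_laplace \<mu> 0"
      using Phi_laplace_0[OF assms(1)] by simp
    ultimately obtain h where "0 \<le> h" "Phi_laplace \<mu> h = exp (- ((\<sigma> * p)\<^sup>2 / 2))"
      using IVT2'[of "Phi_laplace \<mu>" 1 "exp (- ((\<sigma> * p)\<^sup>2 / 2))" 0] elim by auto
    then show ?case
      using Hfun_eqI[OF assms(1,3)] by simp
  qed
qed

lemma Hfun_tendsto_0:
  assumes "0 < \<mu>" "\<mu> < 1" "0 < \<sigma>"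
  shows "(Hfun \<mu> \<sigma> \<longlongrightarrow> 0) (at 0)"
proof (rule tendsto_zero_of_strict_antimono_solutions)
  show "((\<lambda>p. exp (- ((\<sigma> * p)\<^sup>2 / 2))) \<longlongrightarrow> Phi_laplace \<mu> 0) (at 0)"
    unfolding Phi_laplace_0[OF assms(1)] by (auto intro!: tendsto_eq_intros)
qed (use Phi_laplace_strict_antimono[OF assms(1)] eventually_Hfun_solves[OF assms] in auto)

lemma Hfun_powr_asymp_equiv:
  assumes "0 < \<mu>" "\<mu> < 1" "0 < \<sigma>"
  shows "(\<lambda>p. Hfun \<mu> \<sigma> p powr \<mu>) \<sim>[at 0] (\<lambda>p. (\<sigma> * p)\<^sup>2 / (2 * Gamma (1 - \<mu>)))"
proof -
  let ?H = "Hfun \<mu> \<sigma>" and ?K = "shifted_Gamma \<mu>" and ?G = "Gamma (1 - \<mu>)"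
  note solves = eventually_Hfun_solves[OF assms]
  have "((\<lambda>p. ?K (?H p)) \<longlongrightarrow> ?K 0) (at 0)"
  proof (rule continuous_on_tendsto_compose[OF continuous_on_shifted_Gamma[OF assms(1,2)]])
    show "\<forall>\<^sub>F p in at 0. ?H p \<in> {0..}"
      using solves by (rule eventually_mono) simp
  qed (use Hfun_tendsto_0[OF assms] in auto)
  then have K: "((\<lambda>p. ?K (?H p)) \<longlongrightarrow> ?G) (at 0)"
    by (simp add: shifted_Gamma_0[OF assms(2)])
  have "0 < ?G"
    using assms by (intro Gamma_real_pos) simp
  have "(\<lambda>p. 1 - exp (- ((\<sigma> * p)\<^sup>2 / 2))) \<sim>[at 0] (\<lambda>p. (\<sigma> * p)\<^sup>2 / 2)"
    using assms(3) by real_asymp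
  from asymp_equiv_divide[OF this tendsto_imp_asymp_equiv_const[OF K]] show ?thesis
  proof (rule asymp_equiv_transfer)
    have "\<forall>\<^sub>F p in at 0. ?K (?H p) \<noteq> 0"
      using tendsto_imp_eventually_ne[OF K] \<open>0 < ?G\<close> by simp
    with solves show "\<forall>\<^sub>F p in at 0. (1 - exp (- ((\<sigma> * p)\<^sup>2 / 2))) / ?K (?H p) = ?H p powr \<mu>"
    proof eventually_elim
      case (elim p)
      then have "1 - exp (- ((\<sigma> * p)\<^sup>2 / 2)) = ?H p powr \<mu> * ?K (?H p)"
        using Phi_laplace_eq[OF assms(1), of "?H p"] by simp
      with elim show ?case
        by simp
    qed
  qed (use \<open>0 < ?G\<close> in simp_all)
qed

lemma asymp_equiv_powr_inverse:
  fixes f g :: "'a \<Rightarrow> real"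
  assumes "(\<lambda>x. f x powr a) \<sim>[F] g" "a \<noteq> 0"
    and "\<forall>\<^sub>F x in F. 0 \<le> f x" "\<forall>\<^sub>F x in F. 0 \<le> g x"
  shows "f \<sim>[F] (\<lambda>x. g x powr (1 / a))"
proof -
  have "(\<lambda>x. (f x powr a) powr (1 / a)) \<sim>[F] (\<lambda>x. g x powr (1 / a))"
    by (rule asymp_equiv_powr_real[OF assms(1) _ assms(4)]) simp
  then show ?thesis
    by (rule asymp_equiv_transfer[OF _ eventually_mono[OF assms(3)] always_eventually])
      (use assms(2) in \<open>simp_all add: powr_powr\<close>)
qed

theorem proposition2:
  fixes \<mu> \<sigma> :: real
  assumes "0 < \<mu>" "\<mu> < 1" "0 < \<sigma>"
  shows "(\<lambda>p. Hfun \<mu> \<sigma> p) \<sim>[at 0]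
         (\<lambda>p. ((\<sigma> * p)\<^sup>2) powr (1 / \<mu>) * (2 * Gamma (1 - \<mu>)) powr (- 1 / \<mu>))"
proof -
  let ?G = "Gamma (1 - \<mu>)"
  have "0 < ?G"
    using assms by (intro Gamma_real_pos) simp
  have "Hfun \<mu> \<sigma> \<sim>[at 0] (\<lambda>p. ((\<sigma> * p)\<^sup>2 / (2 * ?G)) powr (1 / \<mu>))"
    using Hfun_powr_asymp_equiv[OF assms] eventually_Hfun_solves[OF assms] \<open>0 < ?G\<close> assms(1)
    by (intro asymp_equiv_powr_inverse) (auto elim!: eventually_mono)
  moreover have "(x / (2 * ?G)) powr (1 / \<mu>) = x powr (1 / \<mu>) * (2 * ?G) powr (- 1 / \<mu>)"
    if "0 \<le> x" for x
    using that \<open>0 < ?G\<close> powr_minus_divide[of "2 * ?G" "1 / \<mu>"] by (simp add: powr_divide)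
  ultimately show ?thesis
    by simp
qed

end
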